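(* Let $q\ge5$, $q\not\equiv0\pmod3$. For the orbit $\mathcal O_L$ we have $P_T=V_2+1$ and $P_{1_\Gamma}=V_1$.
   Context: Let $\mathbb F_q$ be the field of order $q$ and $\mathrm{PG}(3,q)$ the projective space with points $\mathbf P(x_0,x_1,x_2,x_3)$. For $t\in\mathbb F_q$ put $P(t)=\mathbf P(t^3,t^2,t,1)$, and $P(\infty)=\mathbf P(1,0,0,0)$; the twisted cubic is $\mathcal C=\{P(t):t\in\mathbb F_q\cup\{\infty\}\}$ and $G_q$ is the group of projectivities fixing $\mathcal C$. The osculating plane at $P(t)$ is $x_0-3tx_1+3t^2x_2-t^3x_3=0$ ($t\in\mathbb F_q$) and $x_3=0$ at $P(\infty)$; these are the $\Gamma$-planes. The tangent at $P(t)$, $t\in\mathbb F_q$, is the line through $P(t)$ and $\mathbf P(3t^2,2t,1,0)$; at $P(\infty)$ it is the line through $\mathbf P(1,0,0,0),\mathbf P(0,1,0,0)$. $T$-points are points off $\mathcal C$ on a tangent; $1_\Gamma$-points are points off $\mathcal C$ lying in exactly one $\Gamma$-plane. $\ell_L$ is the line through $\mathbf P(1,0,0,1)$ and $\mathbf P(0,0,1,0)$, i.e. $\{\mathbf P(0,0,1,0)\}\cup\{\mathbf P(1,0,\beta,1):\beta\in\mathbb F_q\}$, and $\mathcal O_L$ is its $G_q$-orbit; for a point type $\mathfrak p$, $P_{\mathfrak p}$ is the number of $\mathfrak p$-points on a line of $\mathcal O_L$. For $m\in\{0,1,2,3\}$, $V_m$ is the number of $\beta\in\mathbb F_q$ such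 that $t^3-3\beta t^2-1=0$ has exactly $m$ distinct solutions $t\in\mathbb F_q$. *)

theory Defs
  imports "HOL-Analysis.Analysis"
begin

text \<open>Vectors of F_q^4 are 'a^4 with coordinates x0,x1,x2,x3 = x$0,x$1,x$2,x$3.
A point of PG(3,q) is the set of nonzero scalar multiples of a nonzero vector.\<close>

definition vec4 :: "'a \<Rightarrow> 'a \<Rightarrow> 'a \<Rightarrow> 'a \<Rightarrow> ('a^4)" where
  "vec4 a b c d = (\<chi> i. if i = 0 then a else if i = 1 then b else if i = 2 then c else d)"

definition pp :: "(('a::field)^4) \<Rightarrow> ('a^4) set" where
  "pp v = {c *s v | c. c \<noteq> 0}"

definition PG3 :: "(('a::field)^4) set set" where
  "PG3 = {pp v | v. v \<noteq> 0}"

definition pline :: "(('a::field)^4) \<Rightarrow> ('a^4) \<Rightarrow> ('a^4) set set" where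
  "pline u v = {pp (a *s u + b *s v) | a b. a \<noteq> 0 \<or> b \<noteq> 0}"

definition Pt :: "'a::field \<Rightarrow> ('a^4) set" where
  "Pt t = pp (vec4 (t^3) (t^2) t 1)"

definition Pinf :: "(('a::field)^4) set" where
  "Pinf = pp (vec4 1 0 0 0)"

definition twisted_cubic :: "(('a::field)^4) set set" where
  "twisted_cubic = range Pt \<union> {Pinf}"

definition pmap :: "(('a::field)^4^4) \<Rightarrow> ('a^4) set \<Rightarrow> ('a^4) set" where
  "pmap A P = (\<lambda>v. A *v v) ` P"

definition Gq :: "(('a::field)^4^4) set" where
  "Gq = {A. invertible A \<and> pmap A ` twisted_cubic = twisted_cubic}"

text \<open>Gamma-planes (osculating planes); None stands for the parameter infinity.\<close>
definition gamma_plane :: "('a::field) option \<Rightarrow> ('a^4) set set" where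
  "gamma_plane s = (case s of
      Some t \<Rightarrow> {pp x | x. x \<noteq> 0 \<and> x$0 - 3*t*x$1 + 3*t^2*x$2 - t^3*x$3 = 0}
    | None \<Rightarrow> {pp x | x. x \<noteq> 0 \<and> x$3 = 0})"

definition tangent :: "('a::field) option \<Rightarrow> ('a^4) set set" where
  "tangent s = (case s of
      Some t \<Rightarrow> pline (vec4 (t^3) (t^2) t 1) (vec4 (3*t^2) (2*t) 1 0)
    | None \<Rightarrow> pline (vec4 1 0 0 0) (vec4 0 1 0 0))"

definition T_point :: "(('a::field)^4) set \<Rightarrow> bool" where
  "T_point P \<longleftrightarrow> P \<in> PG3 \<and> P \<notin> twisted_cubic \<and> (\<exists>s. P \<in> tangent s)"

definition one_Gamma_point :: "(('a::field)^4) set \<Rightarrow> bool" where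
  "one_Gamma_point P \<longleftrightarrow> P \<in> PG3 \<and> P \<notin> twisted_cubic \<and>
     card {\<pi>. \<pi> \<in> range gamma_plane \<and> P \<in> \<pi>} = 1"

definition ell_L :: "(('a::field)^4) set set" where
  "ell_L = pline (vec4 1 0 0 1) (vec4 0 0 1 0)"

definition orbit_L :: "(('a::field)^4) set set set" where
  "orbit_L = {pmap A ` ell_L | A. A \<in> Gq}"

definition Vm :: "('a::{finite,field}) itself \<Rightarrow> nat \<Rightarrow> nat" where
  "Vm _ m = card {\<beta>::'a::{finite,field}. card {t::'a. t^3 - 3*\<beta>*t^2 - 1 = 0} = m}"

end

(*
  For q >= 5 every projectivity fixing the twisted cubic C is induced by some [[a,b],[c,d]] in
  GL(2,q) acting on binary cubic forms, up to a scalar: composing it with the inverse of the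
  matrix that moves P(inf) and P(0) to their images gives a projectivity fixing both points, and
  since the quadrics through C must vanish on the image of every P(t), that projectivity is
  diag(1, r, r^2, r^3). Tangency and osculation are expressed by bilinear forms -- the polars of
  the three quadrics through C and the alternating form of the null polarity -- which this action
  multiplies by invertible matrices, so G_q preserves T-points and 1_Gamma-points and every line of
  O_L carries the same counts as l_L.
  On l_L, the point P(1,0,beta,1) lies in the osculating plane at P(t) exactly when
  t^3 - 3 beta t^2 - 1 = 0, and on a tangent exactly when this cubic has a double root, which for
  3 != 0 means exactly two distinct roots. The remaining point P(0,0,1,0) lies on the tangent at
  P(0) and in the two osculating planes at P(0) and P(inf).
*)

theory Submission
  imports Defs "HOL-Computational_Algebra.Polynomial"
begin

lemma card_Collect_insert_range:
  fixes f :: "'b::finite \<Rightarrow> 'c"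
  assumes "inj f" "e \<notin> range f"
  shows "card {P \<in> insert e (range f). \<Phi> P} = (if \<Phi> e then 1 else 0) + card {b. \<Phi> (f b)}"
proof -
  have "{P \<in> insert e (range f). \<Phi> P} = (if \<Phi> e then {e} else {}) \<union> f ` {b. \<Phi> (f b)}"
    by auto
  moreover have "card (f ` {b. \<Phi> (f b)}) = card {b. \<Phi> (f b)}"
    using assms(1) by (simp add: card_image inj_on_subset)
  ultimately show ?thesis using assms(2) by (auto simp: card_insert_if)
qed

lemma card_Collect_image_eq:
  assumes "inj_on f S" "\<And>x. x \<in> S \<Longrightarrow> \<Phi> (f x) \<longleftrightarrow> \<Phi> x"
  shows "card {y \<in> f ` S. \<Phi> y} = card {x \<in> S. \<Phi> x}"
proof -
  have "{y \<in> f ` S. \<Phi> y} = f ` {x \<in> S. \<Phi> x}" using assms(2) by auto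
  then show ?thesis using assms(1) by (simp add: card_image inj_on_subset)
qed

section \<open>Finite fields and the cubic \<open>t\<^sup>3 - 3\<beta>t\<^sup>2 - 1\<close>\<close>

lemma cubic_coeffs_eq_0:
  fixes c0 c1 c2 c3 :: "'a::{finite,field}"
  assumes q: "CARD('a) \<ge> 5" and root: "\<And>t. t \<noteq> 0 \<Longrightarrow> c3*t^3 + c2*t^2 + c1*t + c0 = 0"
  shows "c0 = 0 \<and> c1 = 0 \<and> c2 = 0 \<and> c3 = 0"
proof -
  have card: "card (-{0::'a}) = CARD('a) - 1"
    by (simp add: Compl_eq_Diff_UNIV card_Diff_singleton)
  have "degree [:c0, c1, c2, c3:] \<le> 3"
    by (simp add: degree_pCons_eq_if)
  have "[:c0, c1, c2, c3:] = 0"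
  proof (rule poly_eqI_degree)
    fix t :: 'a assume "t \<in> -{0}"
    moreover have "poly [:c0, c1, c2, c3:] t = c3*t^3 + c2*t^2 + c1*t + c0"
      by (simp add: algebra_simps power2_eq_square power3_eq_cube)
    ultimately show "poly [:c0, c1, c2, c3:] t = poly 0 t" using root by simp
  next
    show "degree [:c0, c1, c2, c3:] < card (-{0::'a})"
      using \<open>degree [:c0, c1, c2, c3:] \<le> 3\<close> card q by linarith
    then show "degree (0::'a poly) < card (-{0::'a})" by simp
  qed
  then show ?thesis by simp
qed

lemma three_dvd_card_if_three_eq_0:
  assumes "(3::'a::{finite,field}) = 0"
  shows "3 dvd CARD('a)"
proof -
  have sums: "(1::'a) + 2 = 3" "(2::'a) + 1 = 3" "(2::'a) + 2 = 3 + 1" by simp_all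
  then have shifts: "x + 1 + 2 = x" "x + 2 + 1 = x" "x + 2 + 2 = x + 1" "x + 1 + 1 = x + 2"
    for x :: 'a
    using assms by (simp_all add: add.assoc)
  define r where "r = {(x, y::'a). y \<in> {x, x + 1, x + 2}}"
  have "equiv UNIV r"
    by (rule equivI) (auto simp: refl_on_def sym_def trans_def r_def shifts assms)
  have "(2::'a) \<noteq> 0" "(1::'a) \<noteq> 2"
    using sums assms by (metis add_0 one_neq_zero, metis add_left_cancel add_0 one_neq_zero)
  then have "card {x, x + 1, x + 2} = 3" for x :: 'a
    by simp
  moreover have "r `` {x} = {x, x + 1, x + 2}" for x
    by (auto simp: r_def)
  ultimately show ?thesis
    by (intro equiv_imp_dvd_card[OF _ \<open>equiv UNIV r\<close>]) (auto simp: quotient_def)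
qed

lemma three_neq_0:
  assumes "CARD('a::{finite,field}) mod 3 \<noteq> 0"
  shows "(3::'a) \<noteq> 0"
  using assms three_dvd_card_if_three_eq_0[where 'a = 'a] by auto

lemma cubic_third_root:
  fixes \<beta> r1 r2 :: "'a::field"
  assumes "r1 \<noteq> r2" "r1^3 - 3*\<beta>*r1^2 - 1 = 0" "r2^3 - 3*\<beta>*r2^2 - 1 = 0"
  defines "r3 \<equiv> 3*\<beta> - r1 - r2"
  shows "r1*r2 + r1*r3 + r2*r3 = 0" and "r1*r2*r3 = 1" and "r3^3 - 3*\<beta>*r3^2 - 1 = 0"
proof -
  define e2 e3 where "e2 = r1*r2 + r1*r3 + r2*r3" and "e3 = r1*r2*r3"
  have factor: "t^3 - 3*\<beta>*t^2 - 1 = (t - r1)*(t - r2)*(t - r3) - e2*t + (e3 - 1)" for t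
    unfolding e2_def e3_def r3_def by algebra
  have "e3 - 1 = e2*r1" "e3 - 1 = e2*r2"
    using factor[of r1] factor[of r2] assms(2,3) by simp_all
  then have "e2 * (r1 - r2) = 0" by algebra
  then have "e2 = 0" using assms(1) by simp
  then have "e3 = 1" using \<open>e3 - 1 = e2*r1\<close> by simp
  show "r1*r2 + r1*r3 + r2*r3 = 0" "r1*r2*r3 = 1"
    using \<open>e2 = 0\<close> \<open>e3 = 1\<close> by (simp_all add: e2_def e3_def)
  show "r3^3 - 3*\<beta>*r3^2 - 1 = 0" using factor[of r3] \<open>e2 = 0\<close> \<open>e3 = 1\<close> by simp
qed

lemma double_root_condition:
  fixes \<beta> u w :: "'a::field"
  assumes "(3::'a) \<noteq> 0" "3*\<beta> = 2*u + w" "u*(u + 2*w) = 0" "u^2 * w = 1"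
  shows "(2::'a) \<noteq> 0 \<and> 4*\<beta>^3 = -1"
proof -
  have "u \<noteq> 0" using assms(4) by auto
  then have u: "u + 2*w = 0" using assms(3) by simp
  then have "(2::'a) \<noteq> 0" using \<open>u \<noteq> 0\<close> by auto
  have "3 * (\<beta> + w) = 0" using assms(2) u by algebra
  then have "\<beta> + w = 0" using assms(1) by (metis mult_eq_0_iff)
  then have "4*\<beta>^3 = -1" using u assms(4) by algebra
  with \<open>(2::'a) \<noteq> 0\<close> show ?thesis by simp
qed

lemma card_roots_eq_2_iff:
  fixes \<beta> :: "'a::field"
  assumes three: "(3::'a) \<noteq> 0"
  shows "card {t. t^3 - 3*\<beta>*t^2 - 1 = 0} = 2 \<longleftrightarrow> (2::'a) \<noteq> 0 \<and> 4*\<beta>^3 = -1"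
proof
  assume "card {t. t^3 - 3*\<beta>*t^2 - 1 = 0} = 2"
  then obtain r1 r2 where R: "{t. t^3 - 3*\<beta>*t^2 - 1 = 0} = {r1, r2}" "r1 \<noteq> r2"
    by (auto simp: card_2_iff)
  then have roots: "r1^3 - 3*\<beta>*r1^2 - 1 = 0" "r2^3 - 3*\<beta>*r2^2 - 1 = 0" by blast+
  define r3 where "r3 = 3*\<beta> - r1 - r2"
  note vieta = cubic_third_root[OF R(2) roots, folded r3_def]
  \<comment> \<open>with only two distinct roots, the third root repeats one of them\<close>
  then have "r3 = r1 \<or> r3 = r2" using R(1) by blast
  then show "(2::'a) \<noteq> 0 \<and> 4*\<beta>^3 = -1"
  proof
    assume "r3 = r1"
    then show ?thesis using vieta(1,2)
      by (intro double_root_condition[OF three, of _ r1 r2])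
        (auto simp: r3_def power2_eq_square algebra_simps)
  next
    assume "r3 = r2"
    then show ?thesis using vieta(1,2)
      by (intro double_root_condition[OF three, of _ r2 r1])
        (auto simp: r3_def power2_eq_square algebra_simps)
  qed
next
  assume h: "(2::'a) \<noteq> 0 \<and> 4*\<beta>^3 = -1"
  have "(t - 2*\<beta>)^2 * (t + \<beta>) = t^3 - 3*\<beta>*t^2 + 4*\<beta>^3" for t by algebra
  then have "t^3 - 3*\<beta>*t^2 - 1 = (t - 2*\<beta>)^2 * (t + \<beta>)" for t using h by simp
  then have "{t. t^3 - 3*\<beta>*t^2 - 1 = 0} = {2*\<beta>, -\<beta>}"
    by (auto simp: add_eq_0_iff2)
  moreover have "2*\<beta> \<noteq> -\<beta>"
  proof
    assume "2*\<beta> = -\<beta>"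
    then have "3*\<beta> = 0" by algebra
    then show False using three h by auto
  qed
  ultimately show "card {t. t^3 - 3*\<beta>*t^2 - 1 = 0} = 2" by simp
qed

section \<open>Coordinates and projective points\<close>

lemma numeral_4_eq_0_4 [simp]: "(4::4) = 0"
  by simp

lemma vec4_nth [simp]:
  "vec4 a b c d $ 0 = a" "vec4 a b c d $ 1 = b" "vec4 a b c d $ 2 = c" "vec4 a b c d $ 3 = d"
  by (simp_all add: vec4_def)

lemma vec4_eq_iff: "(x::'a^4) = y \<longleftrightarrow> x$0 = y$0 \<and> x$1 = y$1 \<and> x$2 = y$2 \<and> x$3 = y$3"
  by (auto simp: vec_eq_iff forall_4)

lemma matrix_vector_mult_4:
  "((A::'a::comm_ring_1^4^4) *v x) $ i = A$i$0 * x$0 + A$i$1 * x$1 + A$i$2 * x$2 + A$i$3 * x$3"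
  by (simp add: matrix_vector_mult_def sum_4 add_ac)

lemma mem_pp_iff: "y \<in> pp x \<longleftrightarrow> (\<exists>c. c \<noteq> 0 \<and> y = c *s x)"
  by (auto simp: pp_def)

lemma pp_self: "x \<in> pp x"
  unfolding mem_pp_iff by (rule exI[of _ 1]) simp

lemma pp_smult:
  assumes "c \<noteq> 0"
  shows "pp (c *s x) = pp x"
  unfolding set_eq_iff mem_pp_iff
proof (intro allI iffI)
  fix y assume "\<exists>d. d \<noteq> 0 \<and> y = d *s (c *s x)"
  then obtain d where "d \<noteq> 0" "y = (d * c) *s x" by auto
  then show "\<exists>d. d \<noteq> 0 \<and> y = d *s x" using assms by (metis mult_eq_0_iff)
next
  fix y assume "\<exists>d. d \<noteq> 0 \<and> y = d *s x"
  then obtain d where "d \<noteq> 0" "y = (d / c) *s (c *s x)" using assms by auto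
  then show "\<exists>d. d \<noteq> 0 \<and> y = d *s (c *s x)" using assms by (metis divide_eq_0_iff)
qed

lemma pp_eq_pp_iff: "pp x = pp y \<longleftrightarrow> (\<exists>c. c \<noteq> 0 \<and> x = c *s y)"
proof
  assume "pp x = pp y"
  then show "\<exists>c. c \<noteq> 0 \<and> x = c *s y" using pp_self[of x] by (simp add: mem_pp_iff)
qed (auto simp: pp_smult)

lemma bex_pp_iff:
  assumes "\<And>c w. c \<noteq> 0 \<Longrightarrow> R (c *s w) \<longleftrightarrow> R w"
  shows "(\<exists>w\<in>pp v. R w) \<longleftrightarrow> R v"
proof
  assume "\<exists>w\<in>pp v. R w"
  then show "R v" using assms by (auto simp: mem_pp_iff)
qed (use pp_self in blast)

lemma pp_in_pp_Collect_iff: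
  assumes "\<And>c y. c \<noteq> 0 \<Longrightarrow> R (c *s y) \<longleftrightarrow> R y"
  shows "pp x \<in> {pp y | y. y \<noteq> 0 \<and> R y} \<longleftrightarrow> x \<noteq> 0 \<and> R x"
proof
  assume "pp x \<in> {pp y | y. y \<noteq> 0 \<and> R y}"
  then obtain y c where "y \<noteq> 0" "R y" "c \<noteq> 0" "x = c *s y" by (auto simp: pp_eq_pp_iff)
  then show "x \<noteq> 0 \<and> R x" using assms by simp
qed blast

lemma pp_in_PG3_iff: "pp x \<in> PG3 \<longleftrightarrow> x \<noteq> (0::'a::field^4)"
proof
  assume "pp x \<in> PG3"
  then obtain c v where "v \<noteq> 0" "c \<noteq> 0" "x = c *s v" by (auto simp: PG3_def pp_eq_pp_iff)
  then show "x \<noteq> 0" by simp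
qed (auto simp: PG3_def)

lemma pmap_pp: "pmap A (pp x) = pp (A *v x)"
  by (simp add: pmap_def pp_def setcompr_eq_image image_image vec.scale)

lemma pp_in_pline_iff:
  assumes "x \<noteq> 0"
  shows "pp x \<in> pline u v \<longleftrightarrow> (\<exists>\<alpha> \<beta>. x = \<alpha> *s u + \<beta> *s v)"
proof
  assume "pp x \<in> pline u v"
  then obtain \<alpha> \<beta> c where "x = c *s (\<alpha> *s u + \<beta> *s v)"
    by (auto simp: pline_def pp_eq_pp_iff)
  then have "x = (c * \<alpha>) *s u + (c * \<beta>) *s v" by (simp add: vector_add_ldistrib)
  then show "\<exists>\<alpha> \<beta>. x = \<alpha> *s u + \<beta> *s v" by blast
next
  assume "\<exists>\<alpha> \<beta>. x = \<alpha> *s u + \<beta> *s v"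
  then show "pp x \<in> pline u v"
    using assms unfolding pline_def by fastforce
qed

section \<open>The twisted cubic, its tangents and osculating planes\<close>

definition cubic_vec :: "'a::field option \<Rightarrow> 'a^4" where
  "cubic_vec s = (case s of Some t \<Rightarrow> vec4 (t^3) (t^2) t 1 | None \<Rightarrow> vec4 1 0 0 0)"

definition veronese :: "'a::field \<Rightarrow> 'a \<Rightarrow> 'a^4" where
  "veronese u v = vec4 (u^3) (u^2 * v) (u * v^2) (v^3)"

lemma cubic_vec_simps [simp]:
  "cubic_vec (Some t) = vec4 (t^3) (t^2) t 1" "cubic_vec None = vec4 1 0 0 0"
  by (simp_all add: cubic_vec_def)

lemma cubic_vec_veronese: "cubic_vec (Some t) = veronese t 1" "cubic_vec None = veronese 1 0"
  by (simp_all add: veronese_def)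

lemma cubic_vec_nonzero: "cubic_vec s \<noteq> 0"
  by (cases s) (auto simp: vec4_eq_iff)

lemma twisted_cubic_eq: "twisted_cubic = range (\<lambda>s. pp (cubic_vec s))"
proof -
  have "range (\<lambda>s. pp (cubic_vec s)) = insert Pinf (range Pt)"
    by (simp add: UNIV_option_conv image_image Pt_def Pinf_def)
  then show ?thesis by (metis insert_is_Un sup_commute twisted_cubic_def)
qed

lemma inj_pp_cubic_vec: "inj (\<lambda>s. pp (cubic_vec s))"
proof (rule injI)
  fix s s' :: "'a option"
  assume "pp (cubic_vec s) = pp (cubic_vec s')"
  then obtain c where c: "cubic_vec s = c *s cubic_vec s'" by (auto simp: pp_eq_pp_iff)
  then show "s = s'"
    by (cases s; cases s') (auto simp: vec4_eq_iff)
qed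

lemma twisted_cubic_vector:
  assumes "P \<in> twisted_cubic" "w \<in> P"
  obtains l u v where "l \<noteq> 0" "u \<noteq> 0 \<or> v \<noteq> 0" "w = l *s veronese u v"
proof -
  obtain r where "P = pp (cubic_vec r)" using assms(1) by (auto simp: twisted_cubic_eq)
  then obtain l where l: "l \<noteq> 0" "w = l *s cubic_vec r" using assms(2) by (auto simp: mem_pp_iff)
  show thesis
  proof (cases r)
    case None
    then show thesis using that[of l 1 0] l by (simp add: veronese_def)
  next
    case (Some t)
    then show thesis using that[of l t 1] l by (simp add: veronese_def)
  qed
qed

definition quad1 :: "'a::field^4 \<Rightarrow> 'a" where "quad1 x = x$0 * x$2 - x$1^2"

definition quad2 :: "'a::field^4 \<Rightarrow> 'a" where "quad2 x = x$1 * x$3 - x$2^2"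

definition quad3 :: "'a::field^4 \<Rightarrow> 'a" where "quad3 x = x$0 * x$3 - x$1 * x$2"

lemmas quad_defs = quad1_def quad2_def quad3_def

lemma quad_veronese:
  "quad1 (l *s veronese u v) = 0" "quad2 (l *s veronese u v) = 0" "quad3 (l *s veronese u v) = 0"
  unfolding quad_defs veronese_def by (simp_all add: power2_eq_square power3_eq_cube)

lemma not_in_twisted_cubic:
  assumes "quad1 x \<noteq> 0 \<or> quad2 x \<noteq> 0 \<or> quad3 x \<noteq> 0"
  shows "pp x \<notin> twisted_cubic"
proof
  assume "pp x \<in> twisted_cubic"
  then obtain l u v where "x = l *s veronese u v"
    using twisted_cubic_vector[OF _ pp_self] by metis
  then show False using assms by (simp add: quad_veronese)
qed

definition polar :: "('a::field^4 \<Rightarrow> 'a) \<Rightarrow> 'a^4 \<Rightarrow> 'a^4 \<Rightarrow> 'a" where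
  "polar Q w x = Q (w + x) - Q w - Q x"

text \<open>A point lies on the tangent to \<open>C\<close> at \<open>w\<close> iff it lies on the tangent planes at \<open>w\<close> of
  the three quadrics through \<open>C\<close>.\<close>

definition tangent_incident :: "'a::field^4 \<Rightarrow> 'a^4 \<Rightarrow> bool" where
  "tangent_incident w x \<longleftrightarrow> polar quad1 w x = 0 \<and> polar quad2 w x = 0 \<and> polar quad3 w x = 0"

text \<open>The alternating form of the null polarity of \<open>C\<close>: the osculating plane at a point of \<open>C\<close>
  is its polar plane.\<close>

definition osc_form :: "'a::field^4 \<Rightarrow> 'a^4 \<Rightarrow> 'a" where
  "osc_form w x = w$3 * x$0 - 3 * w$2 * x$1 + 3 * w$1 * x$2 - w$0 * x$3"

definition osc_incident :: "'a::field^4 \<Rightarrow> 'a^4 \<Rightarrow> bool" where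
  "osc_incident w x \<longleftrightarrow> osc_form w x = 0"

lemma polar_quad_expand:
  "polar quad1 w x = w$0 * x$2 + w$2 * x$0 - 2 * w$1 * x$1"
  "polar quad2 w x = w$1 * x$3 + w$3 * x$1 - 2 * w$2 * x$2"
  "polar quad3 w x = w$0 * x$3 + w$3 * x$0 - w$1 * x$2 - w$2 * x$1"
  unfolding polar_def quad_defs by (simp_all add: algebra_simps power2_eq_square)

lemma tangent_incident_smult:
  assumes "c \<noteq> 0" "d \<noteq> 0"
  shows "tangent_incident (c *s w) (d *s x) \<longleftrightarrow> tangent_incident w x"
proof -
  have "polar quad1 (c *s w) (d *s x) = c * d * polar quad1 w x"
    "polar quad2 (c *s w) (d *s x) = c * d * polar quad2 w x"
    "polar quad3 (c *s w) (d *s x) = c * d * polar quad3 w x"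
    by (simp_all add: polar_quad_expand algebra_simps)
  then show ?thesis using assms by (simp add: tangent_incident_def)
qed

lemma osc_incident_smult:
  assumes "c \<noteq> 0" "d \<noteq> 0"
  shows "osc_incident (c *s w) (d *s x) \<longleftrightarrow> osc_incident w x"
proof -
  have "osc_form (c *s w) (d *s x) = c * d * osc_form w x"
    by (simp add: osc_form_def algebra_simps)
  then show ?thesis using assms by (simp add: osc_incident_def)
qed

lemma pp_in_tangent_iff:
  assumes "x \<noteq> 0"
  shows "pp x \<in> tangent s \<longleftrightarrow> tangent_incident (cubic_vec s) x"
proof (cases s)
  case None
  have "pp x \<in> tangent s \<longleftrightarrow> (\<exists>\<alpha> \<beta>. x = \<alpha> *s vec4 1 0 0 0 + \<beta> *s vec4 0 1 0 0)"
    using None by (simp add: tangent_def pp_in_pline_iff[OF assms])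
  also have "\<dots> \<longleftrightarrow> x$2 = 0 \<and> x$3 = 0"
    by (auto simp: vec4_eq_iff intro!: exI[of _ "x$0"] exI[of _ "x$1"])
  finally show ?thesis
    using None by (simp add: tangent_incident_def polar_quad_expand)
next
  case (Some t)
  let ?u = "vec4 (t^3) (t^2) t 1" and ?v = "vec4 (3*t^2) (2*t) 1 0"
  have "pp x \<in> tangent s \<longleftrightarrow> (\<exists>\<alpha> \<beta>. x = \<alpha> *s ?u + \<beta> *s ?v)"
    using Some by (simp add: tangent_def pp_in_pline_iff[OF assms])
  also have "\<dots> \<longleftrightarrow> tangent_incident (cubic_vec s) x"
  proof
    assume "\<exists>\<alpha> \<beta>. x = \<alpha> *s ?u + \<beta> *s ?v"
    then obtain \<alpha> \<beta> where "x = \<alpha> *s ?u + \<beta> *s ?v" by blast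
    then have "x$0 = \<alpha>*t^3 + \<beta>*3*t^2" "x$1 = \<alpha>*t^2 + \<beta>*2*t"
      "x$2 = \<alpha>*t + \<beta>" "x$3 = \<alpha>"
      by simp_all
    then show "tangent_incident (cubic_vec s) x"
      using Some by (simp add: tangent_incident_def polar_quad_expand power2_eq_square
          power3_eq_cube algebra_simps)
  next
    assume "tangent_incident (cubic_vec s) x"
    then have e2: "t^2 * x$3 + 1 * x$1 - 2 * t * x$2 = 0"
      and e3: "t^3 * x$3 + 1 * x$0 - t^2 * x$2 - t * x$1 = 0"
      unfolding tangent_incident_def polar_quad_expand Some cubic_vec_simps vec4_nth by blast+
    have h1: "x$1 = 2*t*x$2 - t^2*x$3" using e2 by (simp add: algebra_simps)
    have h0: "x$0 = t^2*x$2 + t*x$1 - t^3*x$3" using e3 by (simp add: algebra_simps)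
    have "x = x$3 *s ?u + (x$2 - t * x$3) *s ?v"
      unfolding vec4_eq_iff using h0 h1
      by (simp add: power2_eq_square power3_eq_cube algebra_simps)
    then show "\<exists>\<alpha> \<beta>. x = \<alpha> *s ?u + \<beta> *s ?v" by blast
  qed
  finally show ?thesis .
qed

lemma gamma_plane_eq: "gamma_plane s = {pp y | y. y \<noteq> 0 \<and> osc_incident (cubic_vec s) y}"
proof -
  have "osc_incident (cubic_vec s) y \<longleftrightarrow>
      (case s of Some t \<Rightarrow> y$0 - 3*t*y$1 + 3*t^2*y$2 - t^3*y$3 = 0 | None \<Rightarrow> y$3 = 0)" for y
    by (cases s) (auto simp: osc_incident_def osc_form_def algebra_simps)
  then show ?thesis by (cases s) (simp_all add: gamma_plane_def)
qed

lemma pp_in_gamma_plane_iff: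
  assumes "x \<noteq> 0"
  shows "pp x \<in> gamma_plane s \<longleftrightarrow> osc_incident (cubic_vec s) x"
  unfolding gamma_plane_eq using assms osc_incident_smult[OF one_neq_zero]
  by (subst pp_in_pp_Collect_iff) auto

text \<open>Incidence with \<open>C\<close> phrased through its points rather than its parameters, so that it
  can be transported along \<open>pmap A\<close>.\<close>

definition cubic_points_with :: "('a::field^4 \<Rightarrow> 'a^4 \<Rightarrow> bool) \<Rightarrow> 'a^4 \<Rightarrow> ('a^4) set set" where
  "cubic_points_with R x = {P \<in> twisted_cubic. \<exists>w\<in>P. R w x}"

lemma cubic_points_with_eq:
  assumes "\<And>c w. c \<noteq> 0 \<Longrightarrow> R (c *s w) x \<longleftrightarrow> R w x"
  shows "cubic_points_with R x = (\<lambda>s. pp (cubic_vec s)) ` {s. R (cubic_vec s) x}"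
  using bex_pp_iff[where R = "\<lambda>w. R w x", OF assms]
  by (auto simp: cubic_points_with_def twisted_cubic_eq)

lemma cubic_points_with_tangent_eq_empty_iff:
  "cubic_points_with tangent_incident x = {} \<longleftrightarrow> (\<forall>s. \<not> tangent_incident (cubic_vec s) x)"
proof -
  have "cubic_points_with tangent_incident x =
      (\<lambda>s. pp (cubic_vec s)) ` {s. tangent_incident (cubic_vec s) x}"
    by (rule cubic_points_with_eq) (metis tangent_incident_smult one_neq_zero vector_smult_lid)
  then show ?thesis by auto
qed

lemma card_cubic_points_with_osc:
  "card (cubic_points_with osc_incident x) = card {s. osc_incident (cubic_vec s) x}"
proof -
  have "cubic_points_with osc_incident x =
      (\<lambda>s. pp (cubic_vec s)) ` {s. osc_incident (cubic_vec s) x}"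
    by (rule cubic_points_with_eq) (metis osc_incident_smult one_neq_zero vector_smult_lid)
  then show ?thesis by (simp add: card_image inj_on_subset[OF inj_pp_cubic_vec])
qed

lemma osc_incident_cubic_vec_iff: "osc_incident (cubic_vec s) (cubic_vec s') \<longleftrightarrow> s = s'"
proof (cases s; cases s')
  fix t u assume "s = Some t" "s' = Some u"
  moreover have "osc_form (cubic_vec (Some t)) (cubic_vec (Some u)) = (u - t)^3"
    by (simp add: osc_form_def power2_eq_square power3_eq_cube algebra_simps)
  ultimately show ?thesis by (auto simp: osc_incident_def)
qed (simp_all add: osc_incident_def osc_form_def)

lemma inj_gamma_plane: "inj (gamma_plane :: 'a::field option \<Rightarrow> _)"
proof (rule injI)
  fix s s' :: "'a option"
  assume "gamma_plane s = gamma_plane s'"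
  moreover have "pp (cubic_vec s) \<in> gamma_plane s"
    by (simp add: pp_in_gamma_plane_iff cubic_vec_nonzero osc_incident_cubic_vec_iff)
  ultimately show "s = s'"
    by (simp add: pp_in_gamma_plane_iff cubic_vec_nonzero osc_incident_cubic_vec_iff)
qed

lemma T_point_pp_iff:
  "T_point (pp x) \<longleftrightarrow>
     x \<noteq> 0 \<and> pp x \<notin> twisted_cubic \<and> cubic_points_with tangent_incident x \<noteq> {}"
  by (cases "x = 0")
    (auto simp: T_point_def pp_in_PG3_iff pp_in_tangent_iff cubic_points_with_tangent_eq_empty_iff)

lemma one_Gamma_point_pp_iff:
  "one_Gamma_point (pp x) \<longleftrightarrow>
     x \<noteq> 0 \<and> pp x \<notin> twisted_cubic \<and> card (cubic_points_with osc_incident x) = 1"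
proof (cases "x = 0")
  case False
  then have "{\<pi>. \<pi> \<in> range gamma_plane \<and> pp x \<in> \<pi>} =
      gamma_plane ` {s. osc_incident (cubic_vec s) x}"
    by (auto simp: pp_in_gamma_plane_iff)
  then have "card {\<pi>. \<pi> \<in> range gamma_plane \<and> pp x \<in> \<pi>} =
      card (cubic_points_with osc_incident x)"
    by (simp add: card_cubic_points_with_osc card_image inj_on_subset[OF inj_gamma_plane])
  then show ?thesis using False by (simp add: one_Gamma_point_def pp_in_PG3_iff)
qed (simp add: one_Gamma_point_def pp_in_PG3_iff)

section \<open>The group of the twisted cubic\<close>

lemma Gq_inj: "A \<in> Gq \<Longrightarrow> inj ((*v) A)"
  by (simp add: Gq_def inj_matrix_vector_mult)

lemma Gq_surj:
  assumes "A \<in> Gq"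
  shows "surj ((*v) A)"
proof -
  obtain A' where "A ** A' = mat 1" using assms by (auto simp: Gq_def invertible_def)
  then have "A *v (A' *v y) = y" for y by (simp add: matrix_vector_mul_assoc)
  then show ?thesis by (rule surjI)
qed

lemma Gq_twisted_cubic: "A \<in> Gq \<Longrightarrow> pmap A ` twisted_cubic = twisted_cubic"
  by (simp add: Gq_def)

lemma inj_pmap: "inj ((*v) A) \<Longrightarrow> inj (pmap A)"
  unfolding pmap_def by (rule injI) (simp add: inj_image_eq_iff)

lemma Gq_cubic_points_with:
  assumes A: "A \<in> Gq" and R: "\<And>w x. R (A *v w) (A *v x) \<longleftrightarrow> R w x"
  shows "cubic_points_with R (A *v x) = pmap A ` cubic_points_with R x"
proof -
  have "cubic_points_with R (A *v x) = {Q \<in> pmap A ` twisted_cubic. \<exists>w\<in>Q. R w (A *v x)}"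
    by (simp only: cubic_points_with_def Gq_twisted_cubic[OF A])
  also have "\<dots> = pmap A ` {P \<in> twisted_cubic. \<exists>w\<in>pmap A P. R w (A *v x)}"
    by blast
  also have "\<dots> = pmap A ` cubic_points_with R x"
    using R by (simp add: cubic_points_with_def pmap_def)
  finally show ?thesis .
qed

lemma Gq_preserves_point_types:
  assumes A: "A \<in> Gq" and P: "P \<in> PG3"
    and tan: "\<And>w x. tangent_incident (A *v w) (A *v x) \<longleftrightarrow> tangent_incident w x"
    and osc: "\<And>w x. osc_incident (A *v w) (A *v x) \<longleftrightarrow> osc_incident w x"
  shows "T_point (pmap A P) \<longleftrightarrow> T_point P"
    and "one_Gamma_point (pmap A P) \<longleftrightarrow> one_Gamma_point P"
proof -
  obtain x where x: "x \<noteq> 0" "P = pp x" using P by (auto simp: PG3_def)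
  have inj: "inj ((*v) A)" "inj (pmap A)" using Gq_inj[OF A] inj_pmap by blast+
  have nonzero: "A *v x \<noteq> 0 \<longleftrightarrow> x \<noteq> 0"
    using inj(1) by (metis injD matrix_vector_mult_0_right)
  have cubic: "pp (A *v x) \<in> twisted_cubic \<longleftrightarrow> pp x \<in> twisted_cubic"
    using Gq_twisted_cubic[OF A] inj(2) by (metis inj_image_mem_iff pmap_pp)
  show "T_point (pmap A P) \<longleftrightarrow> T_point P"
    unfolding x(2) pmap_pp T_point_pp_iff nonzero cubic
      Gq_cubic_points_with[of A tangent_incident, OF A tan]
    by simp
  show "one_Gamma_point (pmap A P) \<longleftrightarrow> one_Gamma_point P"
    unfolding x(2) pmap_pp one_Gamma_point_pp_iff nonzero cubic
      Gq_cubic_points_with[of A osc_incident, OF A osc]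
    by (simp add: card_image inj_on_subset[OF inj(2)])
qed

lemma Gq_image_cubic_vec:
  assumes "A \<in> Gq"
  obtains l u v where "l \<noteq> 0" "u \<noteq> 0 \<or> v \<noteq> 0" "A *v cubic_vec s = l *s veronese u v"
proof -
  have "pp (cubic_vec s) \<in> twisted_cubic" by (simp add: twisted_cubic_eq)
  then have "pp (A *v cubic_vec s) \<in> pmap A ` twisted_cubic" by (metis pmap_pp imageI)
  then have "pp (A *v cubic_vec s) \<in> twisted_cubic" by (simp add: Gq_twisted_cubic[OF assms])
  then show thesis using that twisted_cubic_vector pp_self by metis
qed

text \<open>The matrix of \<open>[[a, b], [c, d]]\<close> acting on Veronese coordinates
  \<open>(u\<^sup>3, u\<^sup>2v, uv\<^sup>2, v\<^sup>3)\<close> of binary cubics.\<close>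

definition sym3_matrix :: "'a::field \<Rightarrow> 'a \<Rightarrow> 'a \<Rightarrow> 'a \<Rightarrow> 'a^4^4" where
  "sym3_matrix a b c d = vec4
     (vec4 (a^3) (3*a^2*b) (3*a*b^2) (b^3))
     (vec4 (a^2*c) (a^2*d + 2*a*b*c) (2*a*b*d + b^2*c) (b^2*d))
     (vec4 (a*c^2) (2*a*c*d + b*c^2) (a*d^2 + 2*b*c*d) (b*d^2))
     (vec4 (c^3) (3*c^2*d) (3*c*d^2) (d^3))"

lemma sym3_matrix_apply:
  "sym3_matrix a b c d *v x = vec4
     (a^3*x$0 + 3*a^2*b*x$1 + 3*a*b^2*x$2 + b^3*x$3)
     (a^2*c*x$0 + (a^2*d + 2*a*b*c)*x$1 + (2*a*b*d + b^2*c)*x$2 + b^2*d*x$3)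
     (a*c^2*x$0 + (2*a*c*d + b*c^2)*x$1 + (a*d^2 + 2*b*c*d)*x$2 + b*d^2*x$3)
     (c^3*x$0 + 3*c^2*d*x$1 + 3*c*d^2*x$2 + d^3*x$3)"
  by (simp add: vec4_eq_iff matrix_vector_mult_4 sym3_matrix_def)

lemma sym3_matrix_veronese:
  "sym3_matrix a b c d *v veronese u v = veronese (a * u + b * v) (c * u + d * v)"
  unfolding sym3_matrix_apply veronese_def vec4_eq_iff vec4_nth by (intro conjI; algebra)

lemma sym3_matrix_mult:
  "sym3_matrix a b c d *v (sym3_matrix a' b' c' d' *v x) =
     sym3_matrix (a*a' + b*c') (a*b' + b*d') (c*a' + d*c') (c*b' + d*d') *v x"
  unfolding sym3_matrix_apply vec4_eq_iff vec4_nth by (intro conjI; algebra)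

lemma sym3_matrix_adjugate:
  "sym3_matrix d (-b) (-c) a *v (sym3_matrix a b c d *v x) = (a*d - b*c)^3 *s x"
proof -
  have "sym3_matrix k 0 0 k *v x = k^3 *s x" for k
    by (simp add: sym3_matrix_apply vec4_eq_iff power2_eq_square power3_eq_cube algebra_simps)
  then show ?thesis by (simp add: sym3_matrix_mult algebra_simps)
qed

lemma quad_sym3_matrix:
  "quad1 (sym3_matrix a b c d *v x) = (a*d - b*c)^2 * (a^2 * quad1 x + b^2 * quad2 x + a*b * quad3 x)"
  "quad2 (sym3_matrix a b c d *v x) = (a*d - b*c)^2 * (c^2 * quad1 x + d^2 * quad2 x + c*d * quad3 x)"
  "quad3 (sym3_matrix a b c d *v x) =
     (a*d - b*c)^2 * (2*a*c * quad1 x + 2*b*d * quad2 x + (a*d + b*c) * quad3 x)"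
  unfolding sym3_matrix_apply quad_defs vec4_nth by algebra+

lemma osc_form_sym3_matrix:
  "osc_form (sym3_matrix a b c d *v w) (sym3_matrix a b c d *v x) = (a*d - b*c)^3 * osc_form w x"
  unfolding sym3_matrix_apply osc_form_def vec4_nth by algebra

lemma polar_quad_sym3_matrix:
  fixes a b c d :: "'a::field"
  defines "M \<equiv> sym3_matrix a b c d"
  shows "polar quad1 (M *v w) (M *v x) =
      (a*d - b*c)^2 * (a^2 * polar quad1 w x + b^2 * polar quad2 w x + a*b * polar quad3 w x)"
    and "polar quad2 (M *v w) (M *v x) =
      (a*d - b*c)^2 * (c^2 * polar quad1 w x + d^2 * polar quad2 w x + c*d * polar quad3 w x)"
    and "polar quad3 (M *v w) (M *v x) = (a*d - b*c)^2 *
      (2*a*c * polar quad1 w x + 2*b*d * polar quad2 w x + (a*d + b*c) * polar quad3 w x)"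
  unfolding polar_def M_def vec.add[symmetric] quad_sym3_matrix by (simp_all add: algebra_simps)

lemma sym2_combinations_eq_0_iff:
  fixes a b c d u1 u2 u3 :: "'a::field"
  assumes "a*d - b*c \<noteq> 0"
  shows "(a^2*u1 + b^2*u2 + a*b*u3 = 0 \<and> c^2*u1 + d^2*u2 + c*d*u3 = 0 \<and>
          2*a*c*u1 + 2*b*d*u2 + (a*d + b*c)*u3 = 0) \<longleftrightarrow> u1 = 0 \<and> u2 = 0 \<and> u3 = 0"
    (is "?lhs \<longleftrightarrow> _")
proof
  let ?e1 = "a^2*u1 + b^2*u2 + a*b*u3" and ?e2 = "c^2*u1 + d^2*u2 + c*d*u3"
    and ?e3 = "2*a*c*u1 + 2*b*d*u2 + (a*d + b*c)*u3"
  assume ?lhs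
  \<comment> \<open>the inverse of the symmetric square of the matrix, scaled by the squared determinant\<close>
  have "(a*d - b*c)^2 * u1 = d^2 * ?e1 + b^2 * ?e2 - b*d * ?e3"
    "(a*d - b*c)^2 * u2 = c^2 * ?e1 + a^2 * ?e2 - a*c * ?e3"
    "(a*d - b*c)^2 * u3 = - 2*c*d * ?e1 - 2*a*b * ?e2 + (a*d + b*c) * ?e3"
    by algebra+
  then show "u1 = 0 \<and> u2 = 0 \<and> u3 = 0" using \<open>?lhs\<close> assms by simp
qed simp

lemma tangent_incident_sym3_matrix:
  assumes "a*d - b*c \<noteq> 0" "\<mu> \<noteq> 0"
  shows "tangent_incident (\<mu> *s (sym3_matrix a b c d *v w)) (\<mu> *s (sym3_matrix a b c d *v x))
    \<longleftrightarrow> tangent_incident w x"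
proof -
  have "tangent_incident (\<mu> *s (sym3_matrix a b c d *v w)) (\<mu> *s (sym3_matrix a b c d *v x))
      \<longleftrightarrow> tangent_incident (sym3_matrix a b c d *v w) (sym3_matrix a b c d *v x)"
    using assms(2) by (rule tangent_incident_smult) (rule assms(2))
  also have "\<dots> \<longleftrightarrow> tangent_incident w x"
  proof -
    have "(a*d - b*c)^2 * e = 0 \<longleftrightarrow> e = 0" for e using assms(1) by simp
    then show ?thesis
      unfolding tangent_incident_def polar_quad_sym3_matrix
      using sym2_combinations_eq_0_iff[OF assms(1),
          of "polar quad1 w x" "polar quad2 w x" "polar quad3 w x"]
      by (simp only:)
  qed
  finally show ?thesis .
qed

lemma osc_incident_sym3_matrix:
  assumes "a*d - b*c \<noteq> 0" "\<mu> \<noteq> 0"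
  shows "osc_incident (\<mu> *s (sym3_matrix a b c d *v w)) (\<mu> *s (sym3_matrix a b c d *v x))
    \<longleftrightarrow> osc_incident w x"
  unfolding osc_incident_smult[OF assms(2) assms(2)]
  using assms(1) by (simp add: osc_incident_def osc_form_sym3_matrix)

lemma veronese_dependent:
  fixes a b c d :: "'a::field"
  assumes "a*d - b*c = 0" "a \<noteq> 0 \<or> c \<noteq> 0"
  obtains k where "veronese b d = k *s veronese a c"
proof (cases "a = 0")
  case False
  then have d: "d = b*c/a" using assms(1) by (simp add: field_simps)
  have "veronese b d = (b/a)^3 *s veronese a c"
    using False unfolding d
    by (simp add: vec4_eq_iff veronese_def power2_eq_square power3_eq_cube field_simps)
  then show thesis by (rule that)
next
  case True
  then have "c \<noteq> 0" "b = 0" using assms by auto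
  then have "veronese b d = (d/c)^3 *s veronese a c"
    using True by (simp add: vec4_eq_iff veronese_def power3_eq_cube field_simps)
  then show thesis by (rule that)
qed

text \<open>\<open>h t\<close> is the image of \<open>P(t)\<close> under a matrix that fixes \<open>P(\<infinity>)\<close> and \<open>P(0)\<close>.\<close>

lemma cubic_stabilizer_quadric_conditions:
  fixes k0 k3 p0 p1 p2 p3 q0 q1 q2 q3 :: "'a::{finite,field}"
  defines "h t \<equiv> vec4 (k0*t^3 + p0*t^2 + q0*t) (p1*t^2 + q1*t) (p2*t^2 + q2*t) (p3*t^2 + q3*t + k3)"
  assumes q: "CARD('a) \<ge> 5" and "\<And>t. quad1 (h t) = 0" "\<And>t. quad2 (h t) = 0"
  shows "q0*q2 - q1^2 = 0" "p0*q2 + q0*p2 - 2*p1*q1 = 0" "k0*q2 + p0*p2 - p1^2 = 0" "k0*p2 = 0"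
    and "q1*k3 = 0" "p1*k3 + q1*q3 - q2^2 = 0" "p1*q3 + q1*p3 - 2*p2*q2 = 0" "p1*p3 - p2^2 = 0"
proof -
  have "quad1 (h t) = t^2 * ((k0*p2)*t^3 + (k0*q2 + p0*p2 - p1^2)*t^2 +
      (p0*q2 + q0*p2 - 2*p1*q1)*t + (q0*q2 - q1^2))"
    and "quad2 (h t) = t * ((p1*p3 - p2^2)*t^3 + (p1*q3 + q1*p3 - 2*p2*q2)*t^2 +
      (p1*k3 + q1*q3 - q2^2)*t + q1*k3)" for t
    unfolding h_def quad_defs vec4_nth by algebra+
  then show "q0*q2 - q1^2 = 0" "p0*q2 + q0*p2 - 2*p1*q1 = 0" "k0*q2 + p0*p2 - p1^2 = 0" "k0*p2 = 0"
    and "q1*k3 = 0" "p1*k3 + q1*q3 - q2^2 = 0" "p1*q3 + q1*p3 - 2*p2*q2 = 0" "p1*p3 - p2^2 = 0"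
    using assms(3,4) cubic_coeffs_eq_0[OF q] by (metis mult_eq_0_iff power_not_zero)+
qed

lemma cubic_stabilizer_coefficients:
  fixes k0 k3 p0 p1 p2 p3 q0 q1 q2 q3 :: "'a::field"
  assumes "k0 \<noteq> 0" "k3 \<noteq> 0" "p1 \<noteq> 0 \<or> q1 \<noteq> 0"
    and c1: "q0*q2 - q1^2 = 0" "p0*q2 + q0*p2 - 2*p1*q1 = 0" "k0*q2 + p0*p2 - p1^2 = 0" "k0*p2 = 0"
    and c2: "q1*k3 = 0" "p1*k3 + q1*q3 - q2^2 = 0" "p1*q3 + q1*p3 - 2*p2*q2 = 0" "p1*p3 - p2^2 = 0"
  obtains r where "r \<noteq> 0" "p0 = 0" "q0 = 0" "q1 = 0" "p2 = 0" "p3 = 0" "q3 = 0"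
    "p1 = k0 * r" "q2 = k0 * r^2" "k3 = k0 * r^3"
proof -
  have q1: "q1 = 0" and p2: "p2 = 0" using c1(4) c2(1) assms(1,2) by simp_all
  then have p1: "p1 \<noteq> 0" using assms(3) by simp
  have e1: "k0*q2 = p1^2" and e2: "p1*k3 = q2^2" using c1(3) c2(2) p2 q1 by simp_all
  then have q2: "q2 \<noteq> 0" using p1 assms(1) by auto
  have "p3 = 0" "q3 = 0" "p0 = 0" "q0 = 0"
    using c2(3,4) c1(1,2) p1 p2 q1 q2 by simp_all
  moreover define r where "r = p1 / k0"
  moreover have "r \<noteq> 0" "p1 = k0 * r" using p1 assms(1) by (simp_all add: r_def)
  moreover have "q2 = k0 * r^2"
    using e1 \<open>p1 = k0 * r\<close> assms(1) by (simp add: power2_eq_square mult.commute mult.left_commute)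
  moreover have "k3 = k0 * r^3"
  proof -
    have "p1 * k3 = p1 * (k0 * r^3)"
      using e2 \<open>q2 = k0 * r^2\<close> \<open>p1 = k0 * r\<close>
      by (simp add: power2_eq_square power3_eq_cube algebra_simps)
    then show ?thesis using p1 by simp
  qed
  ultimately show thesis using that q1 p2 by blast
qed

lemma matrix_vector_mult_fixing_ends:
  fixes H :: "'a::field^4^4"
  assumes "H *v vec4 1 0 0 0 = k0 *s vec4 1 0 0 0" "H *v vec4 0 0 0 1 = k3 *s vec4 0 0 0 1"
  shows "H *v x = vec4 (k0*x$0 + H$0$1*x$1 + H$0$2*x$2) (H$1$1*x$1 + H$1$2*x$2)
    (H$2$1*x$1 + H$2$2*x$2) (H$3$1*x$1 + H$3$2*x$2 + k3*x$3)"
proof -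
  have "H$0$0 = k0" "H$1$0 = 0" "H$2$0 = 0" "H$3$0 = 0"
    using assms(1) by (simp_all add: vec4_eq_iff matrix_vector_mult_4)
  moreover have "H$0$3 = 0" "H$1$3 = 0" "H$2$3 = 0" "H$3$3 = k3"
    using assms(2) by (simp_all add: vec4_eq_iff matrix_vector_mult_4)
  ultimately show ?thesis by (simp add: vec4_eq_iff matrix_vector_mult_4)
qed

lemma cubic_stabilizer_fixing_two_points:
  fixes H :: "'a::{finite,field}^4^4"
  assumes q: "CARD('a) \<ge> 5" and surj: "surj ((*v) H)"
    and H0: "H *v cubic_vec None = k0 *s cubic_vec None" "k0 \<noteq> 0"
    and H3: "H *v cubic_vec (Some 0) = k3 *s cubic_vec (Some 0)" "k3 \<noteq> 0"
    and HC: "\<And>t. quad1 (H *v cubic_vec (Some t)) = 0" "\<And>t. quad2 (H *v cubic_vec (Some t)) = 0"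
  obtains r where "r \<noteq> 0" "\<And>x. H *v x = k0 *s (sym3_matrix 1 0 0 r *v x)"
proof -
  define p0 p1 p2 p3 where "p0 = H$0$1" "p1 = H$1$1" "p2 = H$2$1" "p3 = H$3$1"
  define q0 q1 q2 q3 where "q0 = H$0$2" "q1 = H$1$2" "q2 = H$2$2" "q3 = H$3$2"
  have Hx: "H *v x = vec4 (k0*x$0 + p0*x$1 + q0*x$2) (p1*x$1 + q1*x$2) (p2*x$1 + q2*x$2)
      (p3*x$1 + q3*x$2 + k3*x$3)" for x
    using matrix_vector_mult_fixing_ends H0(1) H3(1)
    by (simp add: p0_p1_p2_p3_def q0_q1_q2_q3_def)
  have "H *v cubic_vec (Some t) =
      vec4 (k0*t^3 + p0*t^2 + q0*t) (p1*t^2 + q1*t) (p2*t^2 + q2*t) (p3*t^2 + q3*t + k3)" for t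
    by (simp add: Hx)
  note conditions = cubic_stabilizer_quadric_conditions[OF q HC[unfolded this]]
  have "p1 \<noteq> 0 \<or> q1 \<noteq> 0"
  proof -
    obtain z where "H *v z = vec4 0 1 0 0" using surj by (metis surjD)
    then have "p1 * z$1 + q1 * z$2 = 1" by (simp add: Hx vec4_eq_iff)
    then show ?thesis by auto
  qed
  then obtain r where "r \<noteq> 0" "p0 = 0" "q0 = 0" "q1 = 0" "p2 = 0" "p3 = 0" "q3 = 0"
    "p1 = k0 * r" "q2 = k0 * r^2" "k3 = k0 * r^3"
    by (rule cubic_stabilizer_coefficients[OF H0(2) H3(2) _ conditions])
  then show thesis
    using that by (simp add: Hx sym3_matrix_apply vec4_eq_iff algebra_simps)
qed

lemma Gq_image_ends_independent:
  assumes A: "A \<in> Gq" and "l0 \<noteq> 0" "a \<noteq> 0 \<or> c \<noteq> 0"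
    and "A *v cubic_vec None = l0 *s veronese a c" "A *v cubic_vec (Some 0) = l3 *s veronese b d"
  shows "a*d - b*c \<noteq> 0"
proof
  assume "a*d - b*c = 0"
  then obtain k where k: "veronese b d = k *s veronese a c"
    using veronese_dependent assms(3) by metis
  have "A *v ((l3 * k / l0) *s cubic_vec None) = A *v cubic_vec (Some 0)"
    using assms(2,4,5) k by (simp add: vec.scale)
  then have "(l3 * k / l0) *s cubic_vec None = cubic_vec (Some 0)"
    using Gq_inj[OF A] by (rule injD[rotated])
  then show False by (simp add: vec4_eq_iff)
qed

lemma Gq_eq_sym3_matrix:
  fixes A :: "'a::{finite,field}^4^4"
  assumes A: "A \<in> Gq" and q: "CARD('a) \<ge> 5"
  obtains a b c d \<mu> where "a*d - b*c \<noteq> 0" "\<mu> \<noteq> 0"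
    "\<And>x. A *v x = \<mu> *s (sym3_matrix a b c d *v x)"
proof -
  obtain l0 a c where L0: "l0 \<noteq> 0" "a \<noteq> 0 \<or> c \<noteq> 0" "A *v cubic_vec None = l0 *s veronese a c"
    by (rule Gq_image_cubic_vec[OF A])
  obtain l3 b d where L3: "l3 \<noteq> 0" "A *v cubic_vec (Some 0) = l3 *s veronese b d"
    by (rule Gq_image_cubic_vec[OF A])
  define D where "D = a*d - b*c"
  have "D \<noteq> 0" unfolding D_def by (rule Gq_image_ends_independent[OF A L0 L3(2)])
  let ?M = "sym3_matrix a b c d" and ?N = "sym3_matrix d (-b) (-c) a"
  have NM: "?N *v (?M *v x) = D^3 *s x" for x
    by (simp add: sym3_matrix_adjugate D_def)
  have MN: "?M *v (?N *v x) = D^3 *s x" for x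
    using sym3_matrix_adjugate[where a = d and b = "-b" and c = "-c" and d = a]
    by (simp add: D_def mult.commute)
  \<comment> \<open>\<open>H\<close> fixes \<open>P(\<infinity>)\<close> and \<open>P(0)\<close> and still maps \<open>C\<close> into the zeros of the quadrics\<close>
  define H where "H = ?N ** A"
  have Hv: "H *v x = ?N *v (A *v x)" for x
    by (simp add: H_def matrix_vector_mul_assoc)
  have "veronese a c = ?M *v cubic_vec None" "veronese b d = ?M *v cubic_vec (Some 0)"
    by (simp_all only: cubic_vec_veronese sym3_matrix_veronese) simp_all
  then have H0: "H *v cubic_vec None = (l0 * D^3) *s cubic_vec None"
    and H3: "H *v cubic_vec (Some 0) = (l3 * D^3) *s cubic_vec (Some 0)"
    by (simp_all del: cubic_vec_simps add: Hv L0(3) L3(2) vec.scale NM)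
  have HC: "quad1 (H *v cubic_vec (Some t)) = 0" "quad2 (H *v cubic_vec (Some t)) = 0" for t
  proof -
    obtain l u v where "A *v cubic_vec (Some t) = l *s veronese u v"
      by (rule Gq_image_cubic_vec[OF A])
    then show "quad1 (H *v cubic_vec (Some t)) = 0" "quad2 (H *v cubic_vec (Some t)) = 0"
      by (simp_all add: Hv quad_sym3_matrix quad_veronese)
  qed
  have "surj ((*v) ?N)"
    by (rule surjI[of _ "\<lambda>y. ?M *v ((1 / D^3) *s y)"]) (simp add: NM vec.scale \<open>D \<noteq> 0\<close>)
  then have "surj ((*v) H)"
    using Gq_surj[OF A] by (simp add: Hv comp_surj[unfolded comp_def])
  then obtain r where r: "r \<noteq> 0" "\<And>x. H *v x = (l0 * D^3) *s (sym3_matrix 1 0 0 r *v x)"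
    using cubic_stabilizer_fixing_two_points[OF q _ H0 _ H3 _ HC] L0(1) L3(1) \<open>D \<noteq> 0\<close> by auto
  have "D^3 *s (A *v x) = D^3 *s (l0 *s (sym3_matrix a (b*r) c (d*r) *v x))" for x
  proof -
    have "D^3 *s (A *v x) = ?M *v (H *v x)" by (simp add: Hv MN)
    also have "\<dots> = D^3 *s (l0 *s (sym3_matrix a (b*r) c (d*r) *v x))"
      by (simp add: r(2) vec.scale sym3_matrix_mult)
    finally show ?thesis .
  qed
  then have "A *v x = l0 *s (sym3_matrix a (b*r) c (d*r) *v x)" for x
    using \<open>D \<noteq> 0\<close> by (meson power_not_zero vec.scale_left_imp_eq)
  moreover have "a*(d*r) - (b*r)*c \<noteq> 0"
    using \<open>D \<noteq> 0\<close> r(1) by (simp add: D_def algebra_simps flip: right_diff_distrib')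
  ultimately show thesis using that L0(1) by blast
qed

lemma Gq_tangent_incident_iff:
  fixes A :: "'a::{finite,field}^4^4"
  assumes "A \<in> Gq" "CARD('a) \<ge> 5"
  shows "tangent_incident (A *v w) (A *v x) \<longleftrightarrow> tangent_incident w x"
  using Gq_eq_sym3_matrix[OF assms] by (metis tangent_incident_sym3_matrix)

lemma Gq_osc_incident_iff:
  fixes A :: "'a::{finite,field}^4^4"
  assumes "A \<in> Gq" "CARD('a) \<ge> 5"
  shows "osc_incident (A *v w) (A *v x) \<longleftrightarrow> osc_incident w x"
  using Gq_eq_sym3_matrix[OF assms] by (metis osc_incident_sym3_matrix)

lemma Gq_card_image_points_of_type:
  fixes A :: "'a::{finite,field}^4^4"
  assumes A: "A \<in> Gq" and q: "CARD('a) \<ge> 5" and S: "S \<subseteq> PG3"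
    and \<Phi>: "\<Phi> = T_point \<or> \<Phi> = one_Gamma_point"
  shows "card {P \<in> pmap A ` S. \<Phi> P} = card {P \<in> S. \<Phi> P}"
proof (rule card_Collect_image_eq)
  show "inj_on (pmap A) S" using inj_pmap[OF Gq_inj[OF A]] by (rule inj_on_subset) simp
  show "\<Phi> (pmap A P) \<longleftrightarrow> \<Phi> P" if "P \<in> S" for P
    using Gq_preserves_point_types[OF A subsetD[OF S that]
        Gq_tangent_incident_iff[OF A q] Gq_osc_incident_iff[OF A q]] \<Phi>
    by blast
qed

section \<open>The line \<open>\<ell>\<^sub>L\<close>\<close>

lemma ell_L_eq:
  "(ell_L :: ('a::field^4) set set) = insert (pp (vec4 0 0 1 0)) (range (\<lambda>\<beta>. pp (vec4 1 0 \<beta> 1)))"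
proof -
  have "a *s vec4 1 0 0 1 + b *s vec4 0 0 1 0 = (vec4 a 0 b a :: 'a^4)" for a b
    by (simp add: vec4_eq_iff)
  then have "ell_L = {pp (vec4 a 0 b a :: 'a^4) | a b. a \<noteq> 0 \<or> b \<noteq> 0}"
    by (simp add: ell_L_def pline_def)
  also have "\<dots> = insert (pp (vec4 0 0 1 0)) (range (\<lambda>\<beta>. pp (vec4 1 0 \<beta> 1)))"
  proof (intro set_eqI iffI)
    fix P assume "P \<in> {pp (vec4 a 0 b a :: 'a^4) | a b. a \<noteq> 0 \<or> b \<noteq> 0}"
    then obtain a b where ab: "a \<noteq> 0 \<or> b \<noteq> 0" "P = pp (vec4 a 0 b a)" by blast
    show "P \<in> insert (pp (vec4 0 0 1 0)) (range (\<lambda>\<beta>. pp (vec4 1 0 \<beta> 1)))"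
    proof (cases "a = 0")
      case True
      then have "vec4 a 0 b a = b *s (vec4 0 0 1 0 :: 'a^4)" by (simp add: vec4_eq_iff)
      then show ?thesis using ab True by (simp add: pp_smult)
    next
      case False
      then have "vec4 a 0 b a = a *s (vec4 1 0 (b/a) 1 :: 'a^4)" by (simp add: vec4_eq_iff)
      then show ?thesis using ab False by (simp add: pp_smult)
    qed
  next
    fix P assume "P \<in> insert (pp (vec4 0 0 1 0)) (range (\<lambda>\<beta>. pp (vec4 1 0 \<beta> 1 :: 'a^4)))"
    then consider "P = pp (vec4 0 0 1 0)" | \<beta> where "P = pp (vec4 1 0 \<beta> 1)" by blast
    then show "P \<in> {pp (vec4 a 0 b a :: 'a^4) | a b. a \<noteq> 0 \<or> b \<noteq> 0}"
    proof cases
      case 1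
      then show ?thesis using one_neq_zero by blast
    next
      case 2
      then show ?thesis using one_neq_zero by blast
    qed
  qed
  finally show ?thesis .
qed

lemma inj_ell_L_affine: "inj (\<lambda>\<beta>::'a::field. pp (vec4 1 0 \<beta> 1))"
  by (rule injI) (auto simp: pp_eq_pp_iff vec4_eq_iff)

lemma ell_L_infinity_notin_affine:
  "pp (vec4 0 0 1 0) \<notin> range (\<lambda>\<beta>::'a::field. pp (vec4 1 0 \<beta> 1))"
  by (auto simp: pp_eq_pp_iff vec4_eq_iff)

lemma ell_L_subset_PG3: "ell_L \<subseteq> (PG3 :: ('a::field^4) set set)"
  by (auto simp: ell_L_eq pp_in_PG3_iff vec4_eq_iff)

lemma T_point_ell_L_affine:
  fixes \<beta> :: "'a::field"
  shows "T_point (pp (vec4 1 0 \<beta> 1)) \<longleftrightarrow> (2::'a) \<noteq> 0 \<and> 4*\<beta>^3 = -1"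
proof -
  let ?x = "vec4 1 0 \<beta> 1 :: 'a^4"
  have "pp ?x \<notin> twisted_cubic" by (rule not_in_twisted_cubic) (simp add: quad3_def)
  moreover have "tangent_incident (cubic_vec s) ?x \<longleftrightarrow>
      (2::'a) \<noteq> 0 \<and> 4*\<beta>^3 = -1 \<and> s = Some (2*\<beta>)" for s
  proof (cases s)
    case (Some t)
    have "tangent_incident (cubic_vec s) ?x \<longleftrightarrow>
        t * (t^2 * \<beta> + 1) = 0 \<and> t * (t - 2*\<beta>) = 0 \<and> t^3 + 1 - t^2 * \<beta> = 0"
      using Some by (simp add: tangent_incident_def polar_quad_expand power2_eq_square
          power3_eq_cube algebra_simps)
    also have "\<dots> \<longleftrightarrow> (2::'a) \<noteq> 0 \<and> 4*\<beta>^3 = -1 \<and> t = 2*\<beta>"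
    proof
      assume h: "t * (t^2 * \<beta> + 1) = 0 \<and> t * (t - 2*\<beta>) = 0 \<and> t^3 + 1 - t^2 * \<beta> = 0"
      then have "t \<noteq> 0" by auto
      then have "t = 2*\<beta>" "t^2 * \<beta> + 1 = 0" using h by auto
      then have "4*\<beta>^3 = -1" by algebra
      then show "(2::'a) \<noteq> 0 \<and> 4*\<beta>^3 = -1 \<and> t = 2*\<beta>"
        using \<open>t \<noteq> 0\<close> \<open>t = 2*\<beta>\<close> by auto
    next
      assume "(2::'a) \<noteq> 0 \<and> 4*\<beta>^3 = -1 \<and> t = 2*\<beta>"
      then have "4*\<beta>^3 = -1" "t = 2*\<beta>" by simp_all
      then show "t * (t^2 * \<beta> + 1) = 0 \<and> t * (t - 2*\<beta>) = 0 \<and> t^3 + 1 - t^2 * \<beta> = 0"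
        by (intro conjI) algebra+
    qed
    finally show ?thesis using Some by simp
  qed (simp add: tangent_incident_def polar_quad_expand)
  ultimately show ?thesis
    by (auto simp: T_point_pp_iff cubic_points_with_tangent_eq_empty_iff vec4_eq_iff)
qed

lemma T_point_ell_L_infinity: "T_point (pp (vec4 0 0 1 0 :: 'a::field^4))"
proof -
  have "pp (vec4 0 0 1 0 :: 'a^4) \<notin> twisted_cubic"
    by (rule not_in_twisted_cubic) (simp add: quad2_def)
  moreover have "\<exists>s. tangent_incident (cubic_vec s) (vec4 0 0 1 0 :: 'a^4)"
    by (rule exI[of _ "Some 0"]) (simp add: tangent_incident_def polar_quad_expand)
  ultimately show ?thesis
    by (simp add: T_point_pp_iff cubic_points_with_tangent_eq_empty_iff vec4_eq_iff)
qed

lemma one_Gamma_point_ell_L_affine: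
  "one_Gamma_point (pp (vec4 1 0 \<beta> 1)) \<longleftrightarrow> card {t. t^3 - 3*\<beta>*t^2 - 1 = (0::'a::field)} = 1"
proof -
  let ?x = "vec4 1 0 \<beta> 1 :: 'a^4"
  have "pp ?x \<notin> twisted_cubic" by (rule not_in_twisted_cubic) (simp add: quad3_def)
  moreover have "{s. osc_incident (cubic_vec s) ?x} = Some ` {t. t^3 - 3*\<beta>*t^2 - 1 = 0}"
  proof -
    have "osc_incident (cubic_vec (Some t)) ?x \<longleftrightarrow> t^3 - 3*\<beta>*t^2 - 1 = 0" for t
      by (auto simp: osc_incident_def osc_form_def algebra_simps)
    moreover have "\<not> osc_incident (cubic_vec None) ?x"
      by (simp add: osc_incident_def osc_form_def)
    ultimately have "osc_incident (cubic_vec s) ?x \<longleftrightarrow>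
        (\<exists>t. s = Some t \<and> t^3 - 3*\<beta>*t^2 - 1 = 0)" for s
      by (cases s) simp_all
    then show ?thesis by blast
  qed
  ultimately show ?thesis
    by (simp add: one_Gamma_point_pp_iff card_cubic_points_with_osc card_image vec4_eq_iff)
qed

lemma not_one_Gamma_point_ell_L_infinity:
  assumes "(3::'a::field) \<noteq> 0"
  shows "\<not> one_Gamma_point (pp (vec4 0 0 1 0 :: 'a^4))"
proof -
  have "{s. osc_incident (cubic_vec s) (vec4 0 0 1 0 :: 'a^4)} = {None, Some 0}"
  proof -
    have "osc_incident (cubic_vec s) (vec4 0 0 1 0 :: 'a^4) \<longleftrightarrow> s = None \<or> s = Some 0" for s
      using assms by (cases s) (auto simp: osc_incident_def osc_form_def)
    then show ?thesis by auto
  qed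
  then show ?thesis by (simp add: one_Gamma_point_pp_iff card_cubic_points_with_osc)
qed

lemma card_T_points_ell_L:
  assumes "(3::'a::{finite,field}) \<noteq> 0"
  shows "card {P \<in> (ell_L :: ('a^4) set set). T_point P} = Vm TYPE('a) 2 + 1"
proof -
  have "card {P \<in> (ell_L :: ('a^4) set set). T_point P} =
      card {\<beta>::'a. T_point (pp (vec4 1 0 \<beta> 1))} + 1"
    using card_Collect_insert_range[OF inj_ell_L_affine[where 'a = 'a] ell_L_infinity_notin_affine,
        of T_point]
    by (simp add: ell_L_eq T_point_ell_L_infinity)
  also have "\<dots> = Vm TYPE('a) 2 + 1"
    unfolding Vm_def T_point_ell_L_affine card_roots_eq_2_iff[OF assms] ..
  finally show ?thesis .
qed

lemma card_one_Gamma_points_ell_L: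
  assumes "(3::'a::{finite,field}) \<noteq> 0"
  shows "card {P \<in> (ell_L :: ('a^4) set set). one_Gamma_point P} = Vm TYPE('a) 1"
proof -
  have "card {P \<in> (ell_L :: ('a^4) set set). one_Gamma_point P} =
      card {\<beta>::'a. one_Gamma_point (pp (vec4 1 0 \<beta> 1))}"
    using card_Collect_insert_range[OF inj_ell_L_affine[where 'a = 'a] ell_L_infinity_notin_affine,
        of one_Gamma_point]
    by (simp add: ell_L_eq not_one_Gamma_point_ell_L_infinity[OF assms])
  also have "\<dots> = Vm TYPE('a) 1"
    unfolding Vm_def one_Gamma_point_ell_L_affine ..
  finally show ?thesis .
qed

theorem lemma4p3:
  assumes "CARD('a::{finite,field}) \<ge> 5" and "CARD('a) mod 3 \<noteq> 0"
  shows "\<forall>L \<in> (orbit_L :: ('a^4) set set set).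
           card {P \<in> L. T_point P} = Vm TYPE('a) 2 + 1 \<and>
           card {P \<in> L. one_Gamma_point P} = Vm TYPE('a) 1"
proof
  fix L assume "L \<in> (orbit_L :: ('a^4) set set set)"
  then obtain A :: "'a^4^4" where A: "A \<in> Gq" and L: "L = pmap A ` ell_L"
    by (auto simp: orbit_L_def)
  have three: "(3::'a) \<noteq> 0" using three_neq_0[OF assms(2)] .
  show "card {P \<in> L. T_point P} = Vm TYPE('a) 2 + 1 \<and>
      card {P \<in> L. one_Gamma_point P} = Vm TYPE('a) 1"
    unfolding L
    using Gq_card_image_points_of_type[OF A assms(1) ell_L_subset_PG3]
      card_T_points_ell_L[OF three] card_one_Gamma_points_ell_L[OF three]
    by simp
qed

end
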